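(* Let $V$ be a finite ground set with $n=|V|$, let $f:2^V\to\mathbb{R}_{\ge 0}$ be monotone submodular, let $k\ge 1$ be an integer, and let $OPT=\max_{A\subseteq V,|A|\le k} f(A)$. Run the following randomized procedure (Algorithm 1) with threshold $\tau=\frac{OPT}{2k}$: (i) draw a random set $S\subseteq V$ containing each element independently with probability $p=4\sqrt{k/n}$, and independently partition $V$ at random into sets $V_1,\dots,V_m$ (one per machine); (ii) compute $G_0=\textsc{ThresholdGreedy}(S,\emptyset,\tau)$; (iii) for each $i=1,\dots,m$, set $R_i=\textsc{ThresholdFilter}(V_i,G_0,\tau)$ if $|G_0|<k$, and $R_i=\emptyset$ otherwise; (iv) output $G=\textsc{ThresholdGreedy}\big(\bigcup_{i=1}^m R_i,\,G_0,\,\tau\big)$. Then the approximation ratio of this algorithm is at least $1/2$; namely, for every outcome of the random choices, the output satisfies $f(G)\ge \frac12\, OPT$.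
   Context: A function $f:2^V\to\mathbb{R}_{\ge0}$ is submodular if $f(A\cup\{e\})-f(A)\ge f(B\cup\{e\})-f(B)$ for all $A\subseteq B\subseteq V$ and $e\notin B$, and monotone if $f(A\cup\{e\})-f(A)\ge 0$ for all $A$ and $e\notin A$. For $A\subseteq V$ and $e\in V$ write $f_A(e)=f(A\cup\{e\})-f(A)$ (the marginal of $e$ with respect to $A$). Fix a total order on $V$; all sets are scanned in this order. $\textsc{ThresholdGreedy}(T,G,\tau)$ (for $T\subseteq V$, $G\subseteq V$ with $|G|\le k$, $\tau>0$): start with $G'=G$; scan the elements $e\in T$ in the fixed order, and whenever $f_{G'}(e)\ge\tau$ and $|G'|<k$, replace $G'$ by $G'\cup\{e\}$; return $G'$. $\textsc{ThresholdFilter}(T,G,\tau)$ returns $\{e\in T: f_G(e)\ge\tau\}$. Here $m$ is the number of machines (the paper takes $m=\sqrt{n/k}$). *)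

theory Defs
  imports Complex_Main
begin

definition monotone_on_sets :: "'a set \<Rightarrow> ('a set \<Rightarrow> real) \<Rightarrow> bool" where
  "monotone_on_sets V f \<longleftrightarrow>
     (\<forall>A e. A \<subseteq> V \<and> e \<in> V \<and> e \<notin> A \<longrightarrow> f (A \<union> {e}) - f A \<ge> 0)"

definition submodular :: "'a set \<Rightarrow> ('a set \<Rightarrow> real) \<Rightarrow> bool" where
  "submodular V f \<longleftrightarrow>
     (\<forall>A B e. A \<subseteq> B \<and> B \<subseteq> V \<and> e \<in> V \<and> e \<notin> B \<longrightarrow>
        f (A \<union> {e}) - f A \<ge> f (B \<union> {e}) - f B)"

definition marginal :: "('a set \<Rightarrow> real) \<Rightarrow> 'a set \<Rightarrow> 'a \<Rightarrow> real" where
  "marginal f A e = f (A \<union> {e}) - f A"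

fun tg_scan :: "('a set \<Rightarrow> real) \<Rightarrow> nat \<Rightarrow> real \<Rightarrow> 'a list \<Rightarrow> 'a set \<Rightarrow> 'a set" where
  "tg_scan f k tau [] G = G"
| "tg_scan f k tau (e # es) G =
     tg_scan f k tau es (if marginal f G e \<ge> tau \<and> card G < k then G \<union> {e} else G)"

text \<open>ThresholdGreedy(T,G,tau): the fixed total order on V is the linorder of the element type.\<close>
definition threshold_greedy ::
  "('a::linorder set \<Rightarrow> real) \<Rightarrow> nat \<Rightarrow> 'a set \<Rightarrow> 'a set \<Rightarrow> real \<Rightarrow> 'a set" where
  "threshold_greedy f k T G tau = tg_scan f k tau (sorted_list_of_set T) G"

definition threshold_filter ::
  "('a set \<Rightarrow> real) \<Rightarrow> 'a set \<Rightarrow> 'a set \<Rightarrow> real \<Rightarrow> 'a set" where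
  "threshold_filter f T G tau = {e \<in> T. marginal f G e \<ge> tau}"

definition OPT :: "'a set \<Rightarrow> ('a set \<Rightarrow> real) \<Rightarrow> nat \<Rightarrow> real" where
  "OPT V f k = Max (f ` {A. A \<subseteq> V \<and> card A \<le> k})"

end

theory Submission
  imports Defs
begin

text \<open>Either the final set \<open>G\<close> has \<open>k\<close> elements, each added with gain at least \<open>\<tau>\<close>, so
  \<open>f G \<ge> k\<tau> = OPT/2\<close>; or it has fewer, and then no element of \<open>V\<close> has marginal \<open>\<ge> \<tau>\<close>
  with respect to \<open>G\<close>: an element passing the filter was scanned by the last greedy pass while
  the set was not full, and any other element already had marginal \<open>< \<tau>\<close> with respect to
  \<open>G0 \<subseteq> G\<close>. By submodularity an optimal set \<open>A\<close> then satisfies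
  \<open>OPT = f A \<le> f (G \<union> A) \<le> f G + k\<tau> = f G + OPT/2\<close>.\<close>

lemma marginal_nonneg:
  assumes "monotone_on_sets V f" "A \<subseteq> V" "e \<in> V"
  shows "0 \<le> marginal f A e"
proof (cases "e \<in> A")
  case True
  then show ?thesis by (simp add: marginal_def insert_absorb)
next
  case False
  then show ?thesis using assms unfolding monotone_on_sets_def marginal_def by blast
qed

lemma marginal_antimono:
  assumes "monotone_on_sets V f" "submodular V f" "A \<subseteq> B" "B \<subseteq> V" "e \<in> V"
  shows "marginal f B e \<le> marginal f A e"
proof (cases "e \<in> B")
  case True
  then have "marginal f B e = 0" by (simp add: marginal_def insert_absorb)
  with marginal_nonneg[OF assms(1) _ assms(5), of A] assms(3,4) show ?thesis by simp
next
  case False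
  then show ?thesis using assms(2-5) unfolding submodular_def marginal_def by blast
qed

lemma monotone_on_sets_le:
  assumes "monotone_on_sets V f" "finite B" "A \<subseteq> B" "B \<subseteq> V"
  shows "f A \<le> f B"
proof -
  have "f A \<le> f (A \<union> C)" if "finite C" "A \<union> C \<subseteq> V" for C
    using that
  proof (induction C rule: finite_induct)
    case empty
    then show ?case by simp
  next
    case (insert x C)
    have "0 \<le> marginal f (A \<union> C) x"
      using marginal_nonneg[OF assms(1)] insert.prems by simp
    then show ?case using insert by (simp add: marginal_def)
  qed
  from this[of B] assms(2-4) show ?thesis by (simp add: Un_absorb1)
qed

lemma submodular_union_le_sum_marginal:
  assumes "monotone_on_sets V f" "submodular V f" "G \<subseteq> V" "finite A" "A \<subseteq> V"
  shows "f (G \<union> A) - f G \<le> (\<Sum>x\<in>A. marginal f G x)"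
  using assms(4,5)
proof (induction A rule: finite_induct)
  case empty
  then show ?case by simp
next
  case (insert a A)
  have "marginal f (G \<union> A) a \<le> marginal f G a"
    using marginal_antimono[OF assms(1,2)] assms(3) insert.prems by simp
  moreover have "G \<union> insert a A = G \<union> A \<union> {a}" by auto
  ultimately show ?case using insert by (simp add: marginal_def)
qed

lemma OPT_attained:
  assumes "finite V"
  obtains A where "A \<subseteq> V" "card A \<le> k" "f A = OPT V f k"
proof -
  have "finite {A. A \<subseteq> V \<and> card A \<le> k}" "{} \<in> {A. A \<subseteq> V \<and> card A \<le> k}"
    using assms by simp_all
  then have "OPT V f k \<in> f ` {A. A \<subseteq> V \<and> card A \<le> k}"
    unfolding OPT_def by (intro Max_in) blast+
  with that show ?thesis by auto
qed

lemma OPT_le_if_marginals_le: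
  assumes "finite V" "monotone_on_sets V f" "submodular V f" "G \<subseteq> V" "0 \<le> tau"
    and "\<And>e. e \<in> V \<Longrightarrow> marginal f G e \<le> tau"
  shows "OPT V f k \<le> f G + real k * tau"
proof -
  obtain A where A: "A \<subseteq> V" "card A \<le> k" "f A = OPT V f k"
    using OPT_attained[OF assms(1)] .
  have finite_A: "finite A" using A(1) assms(1) finite_subset by blast
  have "f A \<le> f (G \<union> A)"
    using monotone_on_sets_le[OF assms(2), of "G \<union> A" A] assms(1,4) A(1) finite_A finite_subset
    by blast
  also have "\<dots> \<le> f G + (\<Sum>x\<in>A. marginal f G x)"
    using submodular_union_le_sum_marginal[OF assms(2-4) finite_A A(1)] by simp
  also have "\<dots> \<le> f G + (\<Sum>x\<in>A. tau)"
    using sum_mono[of A "marginal f G" "\<lambda>_. tau"] assms(6) A(1) by (simp add: subset_iff)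
  also have "\<dots> \<le> f G + real k * tau"
    using A(2) assms(5) by (simp add: mult_right_mono)
  finally show ?thesis using A(3) by simp
qed

lemma tg_scan_superset: "G \<subseteq> tg_scan f k tau es G"
  by (induction es arbitrary: G) (auto, blast)

lemma tg_scan_subset: "tg_scan f k tau es G \<subseteq> G \<union> set es"
proof (induction es arbitrary: G)
  case Nil
  then show ?case by simp
next
  case (Cons e es)
  show ?case
    using Cons.IH[of "if marginal f G e \<ge> tau \<and> card G < k then G \<union> {e} else G"] by auto
qed

lemma tg_scan_gain:
  assumes "finite G"
  shows "f G + tau * (real (card (tg_scan f k tau es G)) - real (card G))
    \<le> f (tg_scan f k tau es G)"
  using assms
proof (induction es arbitrary: G)
  case Nil
  then show ?case by simp
next
  case (Cons e es)
  define G' where "G' = (if marginal f G e \<ge> tau \<and> card G < k then G \<union> {e} else G)"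
  have "f G + tau * (real (card G') - real (card G)) \<le> f G'"
    using Cons.prems by (cases "e \<in> G") (auto simp: G'_def marginal_def insert_absorb)
  moreover have "f G' + tau * (real (card (tg_scan f k tau es G')) - real (card G'))
      \<le> f (tg_scan f k tau es G')"
    using Cons.IH Cons.prems by (simp add: G'_def)
  ultimately show ?case by (simp add: G'_def[symmetric] algebra_simps)
qed

text \<open>An element rejected while the set was below size k had marginal \<open>< \<tau>\<close> at that moment,
  and its marginal can only decrease as the set grows.\<close>
lemma tg_scan_marginal_less:
  assumes "monotone_on_sets V f" "submodular V f" "finite G" "G \<subseteq> V" "set es \<subseteq> V"
    and "tau > 0" "card (tg_scan f k tau es G) < k" "e \<in> set es"
  shows "marginal f (tg_scan f k tau es G) e < tau"
  using assms(3-8)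
proof (induction es arbitrary: G)
  case Nil
  then show ?case by simp
next
  case (Cons a es)
  define G' where "G' = (if marginal f G a \<ge> tau \<and> card G < k then G \<union> {a} else G)"
  define B where "B = tg_scan f k tau es G'"
  have B_eq: "tg_scan f k tau (a # es) G = B" by (simp add: B_def G'_def)
  have G': "finite G'" "G' \<subseteq> V" using Cons.prems by (auto simp: G'_def)
  have G'_B: "G' \<subseteq> B" unfolding B_def by (rule tg_scan_superset)
  have G_B: "G \<subseteq> B" using G'_B by (auto simp: G'_def split: if_splits)
  have B_V: "B \<subseteq> V"
    using tg_scan_subset[of f k tau es G'] G'(2) Cons.prems(3) unfolding B_def by auto
  have card_B: "card B < k" using Cons.prems(5) B_eq by simp
  consider "e \<in> B" | "e \<in> set es" | "e = a" "e \<notin> B" using Cons.prems(6) by auto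
  then show ?case
  proof cases
    case 1
    then show ?thesis using B_eq Cons.prems(4) by (simp add: marginal_def insert_absorb)
  next
    case 2
    then show ?thesis using Cons.IH[OF G'] Cons.prems(3-5) B_eq B_def by simp
  next
    case 3
    have "finite B"
      using tg_scan_subset[of f k tau es G'] G'(1) finite_subset unfolding B_def by blast
    then have "card G < k" using card_mono[OF _ G_B] card_B by simp
    moreover have "e \<notin> G'" using 3(2) G'_B by blast
    ultimately have "marginal f G e < tau" using 3(1) by (auto simp: G'_def split: if_splits)
    moreover have "marginal f B e \<le> marginal f G e"
      using marginal_antimono[OF assms(1,2) G_B B_V] Cons.prems(3) 3(1) by simp
    ultimately show ?thesis using B_eq by simp
  qed
qed

lemma threshold_greedy_superset: "G \<subseteq> threshold_greedy f k T G tau"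
  unfolding threshold_greedy_def by (rule tg_scan_superset)

lemma threshold_greedy_subset:
  "finite T \<Longrightarrow> threshold_greedy f k T G tau \<subseteq> G \<union> T"
  using tg_scan_subset[of f k tau "sorted_list_of_set T" G] by (simp add: threshold_greedy_def)

lemma threshold_greedy_value_ge_card:
  assumes "finite G" "tau * real (card G) \<le> f G"
  shows "tau * real (card (threshold_greedy f k T G tau)) \<le> f (threshold_greedy f k T G tau)"
  using tg_scan_gain[OF assms(1), where f = f and k = k and tau = tau and es = "sorted_list_of_set T"]
    assms(2)
  by (simp add: threshold_greedy_def algebra_simps)

lemma threshold_greedy_marginal_less:
  assumes "monotone_on_sets V f" "submodular V f" "finite G" "G \<subseteq> V" "finite T" "T \<subseteq> V"
    and "tau > 0" "card (threshold_greedy f k T G tau) < k" "e \<in> T"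
  shows "marginal f (threshold_greedy f k T G tau) e < tau"
  using tg_scan_marginal_less[OF assms(1-4), of "sorted_list_of_set T" tau k e] assms(5-9)
  by (simp add: threshold_greedy_def)

lemma threshold_greedy_after_filter_marginal_less:
  assumes "monotone_on_sets V f" "submodular V f" "finite V" "G \<subseteq> V" "T \<subseteq> V"
    and "threshold_filter f V G tau \<subseteq> T" "tau > 0"
    and "card (threshold_greedy f k T G tau) < k" "e \<in> V"
  shows "marginal f (threshold_greedy f k T G tau) e < tau"
proof (cases "e \<in> T")
  case True
  then show ?thesis
    using threshold_greedy_marginal_less[OF assms(1,2) _ assms(4) _ assms(5,7,8)] assms(3-5)
    by (meson finite_subset)
next
  case False
  have "marginal f G e < tau"
    using False assms(6,9) unfolding threshold_filter_def by auto
  moreover have "finite T" using assms(3,5) finite_subset by blast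
  then have "threshold_greedy f k T G tau \<subseteq> V"
    using threshold_greedy_subset[of T f k G tau] assms(4,5) by blast
  then have "marginal f (threshold_greedy f k T G tau) e \<le> marginal f G e"
    using marginal_antimono[OF assms(1,2) threshold_greedy_superset] assms(9) by blast
  ultimately show ?thesis by simp
qed

lemma threshold_greedy_dichotomy:
  assumes "finite V" "monotone_on_sets V f" "submodular V f" "G0 \<subseteq> V" "T \<subseteq> V" "0 < tau"
    and "tau * real (card G0) \<le> f G0"
    and "card G0 < k \<Longrightarrow> threshold_filter f V G0 tau \<subseteq> T"
  defines "G \<equiv> threshold_greedy f k T G0 tau"
  shows "real k * tau \<le> f G \<or> OPT V f k \<le> f G + real k * tau"
proof (cases "k \<le> card G")
  case True
  have "finite G0" using assms(1,4) finite_subset by blast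
  have "real k * tau \<le> tau * real (card G)" using True assms(6) by simp
  also have "\<dots> \<le> f G"
    unfolding G_def by (rule threshold_greedy_value_ge_card[where f = f, OF \<open>finite G0\<close> assms(7)])
  finally show ?thesis by simp
next
  case False
  have "finite T" using assms(1,5) finite_subset by blast
  have "G \<subseteq> V"
    using threshold_greedy_subset[OF \<open>finite T\<close>, of f k G0 tau] assms(4,5) unfolding G_def by blast
  have "G0 \<subseteq> G" unfolding G_def by (rule threshold_greedy_superset)
  then have "card G0 < k"
    using False card_mono[OF finite_subset[OF \<open>G \<subseteq> V\<close> assms(1)] \<open>G0 \<subseteq> G\<close>] by linarith
  have "card (threshold_greedy f k T G0 tau) < k" using False unfolding G_def by simp
  with \<open>card G0 < k\<close> have "marginal f G e < tau" if "e \<in> V" for e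
    using threshold_greedy_after_filter_marginal_less[OF assms(2,3,1,4,5) assms(8) assms(6) _ that]
    unfolding G_def by blast
  then show ?thesis
    using OPT_le_if_marginals_le[OF assms(1-3) \<open>G \<subseteq> V\<close>] assms(6) by (simp add: less_imp_le)
qed

lemma threshold_filter_UN:
  "threshold_filter f (\<Union>i\<in>I. P i) G tau = (\<Union>i\<in>I. threshold_filter f (P i) G tau)"
  by (auto simp: threshold_filter_def)

theorem lemma1:
  fixes V :: "'a::linorder set" and f :: "'a set \<Rightarrow> real" and k m :: nat
    and S :: "'a set" and P :: "nat \<Rightarrow> 'a set"
  assumes "finite V"
    and "k \<ge> 1"
    and "\<forall>A. A \<subseteq> V \<longrightarrow> f A \<ge> 0"
    and "monotone_on_sets V f"
    and "submodular V f"
    and "S \<subseteq> V"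
    and "(\<Union>i\<in>{1..m}. P i) = V"
    and "\<forall>i\<in>{1..m}. \<forall>j\<in>{1..m}. i \<noteq> j \<longrightarrow> P i \<inter> P j = {}"
  defines "tau \<equiv> OPT V f k / (2 * real k)"
  defines "G0 \<equiv> threshold_greedy f k S {} tau"
  defines "R \<equiv> (\<lambda>i. if card G0 < k then threshold_filter f (P i) G0 tau else {})"
  defines "G \<equiv> threshold_greedy f k (\<Union>i\<in>{1..m}. R i) G0 tau"
  shows "f G \<ge> OPT V f k / 2"
proof -
  define U where "U = (\<Union>i\<in>{1..m}. R i)"
  have G_eq: "G = threshold_greedy f k U G0 tau" unfolding G_def U_def ..
  have "R i \<subseteq> P i" for i by (simp add: R_def threshold_filter_def)
  then have U: "U \<subseteq> V" using assms(7) unfolding U_def by blast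
  have "U = threshold_filter f V G0 tau" if "card G0 < k"
    using threshold_filter_UN[of f P "{1..m}" G0 tau] that assms(7) by (simp add: U_def R_def)
  moreover have "finite S" using assms(1,6) finite_subset by blast
  then have G0: "G0 \<subseteq> V"
    using threshold_greedy_subset[of S f k "{}" tau] assms(6) unfolding G0_def by blast
  moreover have "tau * real (card G0) \<le> f G0"
    using threshold_greedy_value_ge_card[of "{}" tau f k S] assms(3) unfolding G0_def by simp
  ultimately have dichotomy: "real k * tau \<le> f G \<or> OPT V f k \<le> f G + real k * tau" if "0 < tau"
    using threshold_greedy_dichotomy[OF assms(1,4,5) G0 U that] unfolding G_eq by blast
  have "finite U" using U assms(1) finite_subset by blast
  then have "0 \<le> f G"
    using assms(3) threshold_greedy_subset[of U f k G0 tau] U G0 unfolding G_eq by blast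
  moreover have "real k * tau = OPT V f k / 2" using assms(2) by (simp add: tau_def)
  moreover have "0 < tau \<longleftrightarrow> 0 < OPT V f k" using assms(2) by (simp add: tau_def zero_less_divide_iff)
  ultimately show ?thesis using dichotomy by (cases "0 < tau") auto
qed

end
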